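(* Let $G$ be a finite graph and let $a\ge 0$, $b\ge 1$ be integers. Then $\phi^a_b(M(G))\ge \phi^{a+b}_{2b}(G)$. Moreover, for every positive integer $t$, $\phi^0_2(M^t(G))\ge \phi^{2^{t+1}-2}_{2^{t+1}}(G)$.
   Context: For $G$ with $V(G)=\{v_1,\dots,v_n\}$, the Mycielskian $M(G)$ has vertex set $\{v_1,\dots,v_n\}\cup\{v'_1,\dots,v'_n\}\cup\{z\}$ and edge set $E(G)\cup\{v'_iv_j: v_iv_j\in E(G)\}\cup\{zv'_i: 1\le i\le n\}$. $M^1(G)=M(G)$ and $M^t(G)=M(M^{t-1}(G))$ for $t\ge2$. An independent set $F$ of $G$ is free if it is contained in at least two distinct maximal independent sets; an edge $uv$ supports $F$ if $F\cap(N(u)\cup N(v))=\emptyset$. For integers $a\ge0,b\ge1$, $\phi^a_b(G)$ is the minimum $t$ such that $V(G)$ is partitioned into independent sets $V_1,\dots,V_t$ with $V_1,\dots,V_{t-a}$ free, and there are edges $e_1,\dots,e_{t-a}$ (not necessarily distinct) with $e_i$ supporting $V_i$ and every vertex incident with at most $b$ of $e_1,\dots,e_{t-a}$; $\phi^a_b(G)=\infty$ if no such $t$ exists. *)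

theory Defs
  imports Main "HOL-Library.Extended_Nat"
begin

record 'v graph =
  verts :: "'v set"
  edges :: "'v set set"

definition finite_graph :: "('v, 'm) graph_scheme \<Rightarrow> bool" where
  "finite_graph G \<longleftrightarrow> finite (verts G) \<and>
     (\<forall>e\<in>edges G. \<exists>u v. u \<noteq> v \<and> e = {u, v} \<and> u \<in> verts G \<and> v \<in> verts G)"

definition nbhd :: "'v graph \<Rightarrow> 'v \<Rightarrow> 'v set" where
  "nbhd G u = {w. {u, w} \<in> edges G}"

definition indep :: "'v graph \<Rightarrow> 'v set \<Rightarrow> bool" where
  "indep G S \<longleftrightarrow> S \<subseteq> verts G \<and> (\<forall>u\<in>S. \<forall>w\<in>S. {u, w} \<notin> edges G)"

definition max_indep :: "'v graph \<Rightarrow> 'v set \<Rightarrow> bool" where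
  "max_indep G S \<longleftrightarrow> indep G S \<and> (\<forall>T. indep G T \<and> S \<subseteq> T \<longrightarrow> T = S)"

definition free_set :: "'v graph \<Rightarrow> 'v set \<Rightarrow> bool" where
  "free_set G F \<longleftrightarrow> indep G F \<and>
     (\<exists>S1 S2. S1 \<noteq> S2 \<and> max_indep G S1 \<and> max_indep G S2 \<and> F \<subseteq> S1 \<and> F \<subseteq> S2)"

definition supports :: "'v graph \<Rightarrow> 'v set \<Rightarrow> 'v set \<Rightarrow> bool" where
  "supports G e F \<longleftrightarrow> e \<in> edges G \<and> (\<forall>u\<in>e. F \<inter> nbhd G u = {})"

definition phi_ok :: "nat \<Rightarrow> nat \<Rightarrow> 'v graph \<Rightarrow> nat \<Rightarrow> bool" where
  "phi_ok a b G t \<longleftrightarrow> (\<exists>P :: nat \<Rightarrow> 'v set. \<exists>e :: nat \<Rightarrow> 'v set.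
      (\<Union>i<t. P i) = verts G \<and>
      (\<forall>i<t. P i \<noteq> {} \<and> indep G (P i)) \<and>
      (\<forall>i<t. \<forall>j<t. i \<noteq> j \<longrightarrow> P i \<inter> P j = {}) \<and>
      (\<forall>i<t - a. free_set G (P i) \<and> supports G (e i) (P i)) \<and>
      (\<forall>v. card {i. i < t - a \<and> v \<in> e i} \<le> b))"

definition phi :: "nat \<Rightarrow> nat \<Rightarrow> 'v graph \<Rightarrow> enat" where
  "phi a b G = (INF t\<in>{t. phi_ok a b G t}. enat t)"

text \<open>Vertex type closed under the Mycielski construction.\<close>
datatype 'a mv = Base 'a | Old "'a mv" | New "'a mv" | Apex

definition mycielskian :: "'a mv graph \<Rightarrow> 'a mv graph" where
  "mycielskian G = \<lparr> verts = Old ` verts G \<union> New ` verts G \<union> {Apex},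
     edges = {{Old x, Old y} | x y. {x, y} \<in> edges G}
           \<union> {{New x, Old y} | x y. {x, y} \<in> edges G}
           \<union> {{Apex, New x} | x. x \<in> verts G} \<rparr>"

end

theory Submission
  imports Defs
begin

text \<open>
  A partition witnessing \<open>\<phi>\<^sup>a\<^sub>b(M(G))\<close> restricts to a partition of \<open>G\<close> through the old copies:
  the class \<open>P\<^sub>i\<close> becomes \<open>{v. Old v \<in> P\<^sub>i}\<close>. An edge of \<open>M(G)\<close> avoiding the apex is
  \<open>Old x Old y\<close> or \<open>New x Old y\<close> with \<open>xy \<in> E(G)\<close>, and \<open>xy\<close> supports the restricted class,
  since every neighbour \<open>w\<close> of \<open>x\<close> in \<open>G\<close> gives neighbours \<open>Old w\<close> of both \<open>Old x\<close> and \<open>New x\<close>.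
  The at most \<open>b\<close> classes whose edge passes through the apex join the \<open>a\<close> unconstrained ones,
  and a vertex \<open>v\<close> of \<open>G\<close> lies on at most \<open>2b\<close> projected edges, \<open>b\<close> through \<open>Old v\<close> and \<open>b\<close>
  through \<open>New v\<close>. Dropping empty classes and putting the supported ones first gives
  \<open>\<phi>\<^sup>a\<^sup>+\<^sup>b\<^sub>2\<^sub>b(G) \<le> \<phi>\<^sup>a\<^sub>b(M(G))\<close>; iterating this \<open>t\<close> times from \<open>(a, b) = (0, 2)\<close> gives the second claim.
\<close>

lemma finite_graph_edgeE:
  assumes "finite_graph G" "e \<in> edges G"
  obtains u v where "u \<noteq> v" "e = {u, v}" "u \<in> verts G" "v \<in> verts G"
  using assms unfolding finite_graph_def by blast

lemma finite_graph_edge_doubleton: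
  assumes "finite_graph G" "{u, v} \<in> edges G"
  shows "u \<noteq> v" "u \<in> verts G" "v \<in> verts G"
  using assms unfolding finite_graph_def by (metis doubleton_eq_iff)+

lemma max_indep_extend:
  assumes "finite_graph G" "indep G S"
  obtains T where "max_indep G T" "S \<subseteq> T"
proof -
  let ?A = "{T. indep G T \<and> S \<subseteq> T}"
  have fin: "finite ?A"
    using assms(1) unfolding finite_graph_def indep_def
    by (rule_tac finite_subset[of _ "Pow (verts G)"]) auto
  have ne: "?A \<noteq> {}" using assms(2) by auto
  obtain T where T: "T \<in> ?A" "\<forall>T'\<in>?A. T \<le> T' \<longrightarrow> T = T'"
    using finite_has_maximal[OF fin ne] by blast
  then have "max_indep G T"
    unfolding max_indep_def by auto
  with T show thesis using that by blast
qed

text \<open>The two ends of a supporting edge extend \<open>F\<close> to two different maximal independent sets.\<close>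

lemma supports_imp_free_set:
  assumes fg: "finite_graph G" and ind: "indep G F" and sup: "supports G e F"
  shows "free_set G F"
proof -
  have eE: "e \<in> edges G" and nb: "\<forall>u\<in>e. F \<inter> nbhd G u = {}"
    using sup unfolding supports_def by auto
  obtain u v where uv: "u \<noteq> v" "e = {u, v}" "u \<in> verts G" "v \<in> verts G"
    using finite_graph_edgeE[OF fg eE] .
  have no_loop: "{x} \<notin> edges G" for x
    using finite_graph_edge_doubleton[OF fg, of x x] by auto
  have indep_insert: "indep G (insert w F)" if "w \<in> e" for w
    using ind nb that uv no_loop unfolding indep_def nbhd_def by (auto simp: insert_commute)
  obtain S1 where S1: "max_indep G S1" "insert u F \<subseteq> S1"
    using max_indep_extend[OF fg indep_insert] uv(2) by blast
  obtain S2 where S2: "max_indep G S2" "insert v F \<subseteq> S2"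
    using max_indep_extend[OF fg indep_insert] uv(2) by blast
  have "S1 \<noteq> S2"
  proof
    assume "S1 = S2"
    then have "u \<in> S1" "v \<in> S1" using S1 S2 by auto
    then show False using S1(1) eE uv(2) unfolding max_indep_def indep_def by auto
  qed
  then show ?thesis unfolding free_set_def using ind S1 S2 by blast
qed

lemma distinct_list_with_prefix:
  assumes "finite A" "finite B" "A \<inter> B = {}"
  obtains L where "distinct L" "set L = A \<union> B" "length L = card A + card B"
    "\<And>j. j < card A \<Longrightarrow> L ! j \<in> A"
proof -
  obtain as bs where "distinct as" "set as = A" "distinct bs" "set bs = B"
    using assms(1,2) finite_distinct_list by metis
  then show thesis
    using that[of "as @ bs"] assms(3) by (auto simp: nth_append distinct_card)
qed

lemma card_subset_Un_le:
  assumes "finite A" "finite B" "card A \<le> m" "card B \<le> n" "C \<subseteq> A \<union> B"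
  shows "card C \<le> m + n"
  using card_mono[of "A \<union> B" C] card_Un_le[of A B] assms by fastforce

lemma UN_lessThan_length_nth: "(\<Union>j<length L. W (L ! j)) = (\<Union>i\<in>set L. W i)"
  by (auto simp: in_set_conv_nth) (metis nth_mem)

lemma card_indices_le:
  assumes "distinct L" "finite A" "k \<le> length L" "\<And>j. j < k \<Longrightarrow> Q j \<Longrightarrow> L ! j \<in> A"
  shows "card {j. j < k \<and> Q j} \<le> card A"
proof (rule card_inj_on_le[where f="(!) L"])
  show "inj_on ((!) L) {j. j < k \<and> Q j}"
    using assms(1,3) unfolding inj_on_def by (auto simp: nth_eq_iff_index_eq)
qed (use assms in auto)

text \<open>
  The witness lists the nonempty classes, supported ones first; their freeness comes for free
  from \<open>supports_imp_free_set\<close>.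
\<close>

lemma phi_ok_of_cover:
  assumes fg: "finite_graph G"
    and cover: "(\<Union>i<t. W i) = verts G"
    and ind: "\<forall>i<t. indep G (W i)"
    and disj: "\<forall>i<t. \<forall>j<t. i \<noteq> j \<longrightarrow> W i \<inter> W j = {}"
    and good: "Good \<subseteq> {..<t}"
    and sup: "\<forall>i\<in>Good. supports G (f i) (W i)"
    and bad: "card ({..<t} - Good) \<le> c"
    and mult: "\<forall>v. card {i\<in>Good. v \<in> f i} \<le> B"
  obtains t' where "t' \<le> t" "phi_ok c B G t'"
proof -
  define N where "N = {i. i < t \<and> W i \<noteq> {}}"
  have fin: "finite (Good \<inter> N)" "finite (N - Good)" unfolding N_def by auto
  obtain L where dL: "distinct L" and "set L = (Good \<inter> N) \<union> (N - Good)"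
    and lenL: "length L = card (Good \<inter> N) + card (N - Good)"
    and L_prefix: "\<And>j. j < card (Good \<inter> N) \<Longrightarrow> L ! j \<in> Good \<inter> N"
    using distinct_list_with_prefix[OF fin] by blast
  then have sL: "set L = N" by blast
  define t' where "t' = length L"
  have L_N: "L ! j \<in> N" if "j < t'" for j
    using sL that unfolding t'_def by auto
  have "card (N - Good) \<le> c"
    using bad unfolding N_def by (rule_tac order_trans[OF card_mono]) auto
  then have L_Good: "L ! j \<in> Good" if "j < t' - c" for j
    using L_prefix that unfolding t'_def lenL by auto
  have "t' \<le> t"
    using dL sL distinct_card[OF dL] card_mono[of "{..<t}" N]
    unfolding t'_def N_def by auto
  moreover have "phi_ok c B G t'"
    unfolding phi_ok_def
  proof (intro exI conjI allI impI)
    have "(\<Union>j<t'. W (L ! j)) = (\<Union>i\<in>set L. W i)"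
      unfolding t'_def by (rule UN_lessThan_length_nth)
    also have "\<dots> = (\<Union>i<t. W i)"
      unfolding sL N_def by blast
    finally show "(\<Union>j<t'. W (L ! j)) = verts G"
      using cover by simp
  next
    fix j assume "j < t'"
    then show "W (L ! j) \<noteq> {}" "indep G (W (L ! j))"
      using L_N ind unfolding N_def by auto
  next
    fix i j assume "i < t'" "j < t'" "i \<noteq> j"
    moreover from this have "L ! i \<noteq> L ! j"
      using dL unfolding t'_def by (simp add: nth_eq_iff_index_eq)
    ultimately show "W (L ! i) \<inter> W (L ! j) = {}"
      using disj L_N unfolding N_def by auto
  next
    fix j assume j: "j < t' - c"
    then show sup_j: "supports G (f (L ! j)) (W (L ! j))"
      using sup L_Good by auto
    show "free_set G (W (L ! j))"
      using supports_imp_free_set[OF fg _ sup_j] ind L_N j unfolding N_def by auto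
  next
    fix v
    have "card {j. j < t' - c \<and> v \<in> f (L ! j)} \<le> card {i\<in>Good. v \<in> f i}"
      using dL L_Good good unfolding t'_def
      by (intro card_indices_le) (auto intro: finite_subset[of _ "{..<t}"])
    then show "card {j. j < t' - c \<and> v \<in> f (L ! j)} \<le> B"
      using mult order_trans by blast
  qed
  ultimately show thesis using that by blast
qed

lemma phi_le_enat: "phi_ok a b G t \<Longrightarrow> phi a b G \<le> enat t"
  unfolding phi_def by (rule INF_lower) simp

lemma phi_mono_by_witnesses:
  assumes "\<And>t. phi_ok a b H t \<Longrightarrow> \<exists>t'\<le>t. phi_ok c d G t'"
  shows "phi c d G \<le> phi a b H"
  unfolding phi_def[of a b H]
proof (rule INF_greatest)
  fix t assume "t \<in> {t. phi_ok a b H t}"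
  then obtain t' where "t' \<le> t" "phi_ok c d G t'" using assms by blast
  then show "phi c d G \<le> enat t" using phi_le_enat order_trans enat_ord_simps(1) by blast
qed

lemma verts_mycielskian: "verts (mycielskian G) = Old ` verts G \<union> New ` verts G \<union> {Apex}"
  by (simp add: mycielskian_def)

lemma edges_mycielskianI:
  assumes "{x, y} \<in> edges G"
  shows "{Old x, Old y} \<in> edges (mycielskian G)" "{New x, Old y} \<in> edges (mycielskian G)"
  using assms by (auto simp: mycielskian_def)

lemma edges_mycielskian_without_Apex:
  assumes "e \<in> edges (mycielskian G)" "Apex \<notin> e"
  obtains x y where "{x, y} \<in> edges G" "e = {Old x, Old y} \<or> e = {New x, Old y}"
  using assms unfolding mycielskian_def by auto

lemma finite_graph_mycielskian:
  assumes fg: "finite_graph G"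
  shows "finite_graph (mycielskian G)"
proof -
  note G_edge = finite_graph_edge_doubleton[OF fg]
  have "\<exists>u v. u \<noteq> v \<and> e = {u, v} \<and> u \<in> verts (mycielskian G) \<and> v \<in> verts (mycielskian G)"
    if e: "e \<in> edges (mycielskian G)" for e
  proof (cases "Apex \<in> e")
    case True
    with e obtain x where "x \<in> verts G" "e = {Apex, New x}"
      unfolding mycielskian_def by auto
    then show ?thesis by (auto simp: verts_mycielskian)
  next
    case False
    with e obtain x y where "{x, y} \<in> edges G" "e = {Old x, Old y} \<or> e = {New x, Old y}"
      by (rule edges_mycielskian_without_Apex)
    moreover have "Old x \<noteq> Old y" "New x \<noteq> Old y" "Old x \<in> verts (mycielskian G)"
      "New x \<in> verts (mycielskian G)" "Old y \<in> verts (mycielskian G)"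
      using G_edge[OF \<open>{x, y} \<in> edges G\<close>] by (auto simp: verts_mycielskian)
    ultimately show ?thesis by blast
  qed
  moreover have "finite (verts (mycielskian G))"
    using fg unfolding finite_graph_def verts_mycielskian by auto
  ultimately show ?thesis unfolding finite_graph_def by blast
qed

lemma finite_graph_mycielskian_funpow:
  "finite_graph G \<Longrightarrow> finite_graph ((mycielskian ^^ k) G)"
  by (induction k) (simp_all add: finite_graph_mycielskian)

text \<open>Identifies both copies \<open>Old x\<close>, \<open>New x\<close> with \<open>x\<close>; the other two equations are arbitrary.\<close>

fun mycielski_proj :: "'a mv \<Rightarrow> 'a mv" where
  "mycielski_proj (Old x) = x"
| "mycielski_proj (New x) = x"
| "mycielski_proj (Base x) = Base x"
| "mycielski_proj Apex = Apex"

lemma indep_mycielskian_Old: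
  assumes "indep (mycielskian G) P"
  shows "indep G {v. Old v \<in> P}"
  using assms edges_mycielskianI(1) unfolding indep_def verts_mycielskian by blast

lemma supports_mycielskian_proj:
  assumes sup: "supports (mycielskian G) e P" and nA: "Apex \<notin> e"
  shows "supports G (mycielski_proj ` e) {v. Old v \<in> P}"
proof -
  have eM: "e \<in> edges (mycielskian G)" and nb: "\<forall>p\<in>e. P \<inter> nbhd (mycielskian G) p = {}"
    using sup unfolding supports_def by auto
  obtain x y where xy: "{x, y} \<in> edges G" "e = {Old x, Old y} \<or> e = {New x, Old y}"
    using edges_mycielskian_without_Apex[OF eM nA] .
  have "{v. Old v \<in> P} \<inter> nbhd G u = {}" if "Old u \<in> e \<or> New u \<in> e" for u
  proof -
    have "Old w \<notin> P" if "{u, w} \<in> edges G" for w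
      using edges_mycielskianI[OF that] nb \<open>Old u \<in> e \<or> New u \<in> e\<close>
      unfolding nbhd_def by blast
    then show ?thesis unfolding nbhd_def by blast
  qed
  moreover have "mycielski_proj ` e = {x, y}" using xy(2) by auto
  ultimately show ?thesis
    unfolding supports_def using xy by auto
qed

lemma mem_mycielski_proj_edge:
  assumes "e \<in> edges (mycielskian G)" "Apex \<notin> e" "v \<in> mycielski_proj ` e"
  shows "Old v \<in> e \<or> New v \<in> e"
  using assms by (elim edges_mycielskian_without_Apex) auto

lemma phi_ok_mycielskian_imp:
  assumes fg: "finite_graph G" and ok: "phi_ok a b (mycielskian G) t"
  shows "\<exists>t'\<le>t. phi_ok (a + b) (2 * b) G t'"
proof -
  let ?M = "mycielskian G"
  obtain P e where
    cover: "(\<Union>i<t. P i) = verts ?M" and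
    ind: "\<forall>i<t. P i \<noteq> {} \<and> indep ?M (P i)" and
    disj: "\<forall>i<t. \<forall>j<t. i \<noteq> j \<longrightarrow> P i \<inter> P j = {}" and
    sup: "\<forall>i<t - a. free_set ?M (P i) \<and> supports ?M (e i) (P i)" and
    mult: "\<forall>v. card {i. i < t - a \<and> v \<in> e i} \<le> b"
    using ok unfolding phi_ok_def by blast
  define W where "W i = {v. Old v \<in> P i}" for i
  define Good where "Good = {i. i < t - a \<and> Apex \<notin> e i}"
  have "{..<t} - Good \<subseteq> {t - a..<t} \<union> {i. i < t - a \<and> Apex \<in> e i}"
    unfolding Good_def by auto
  then have bad: "card ({..<t} - Good) \<le> a + b"
    by (rule card_subset_Un_le[rotated 4]) (use mult in auto)
  have edge: "e i \<in> edges ?M" if "i \<in> Good" for i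
    using sup that unfolding Good_def supports_def by auto
  have "{i\<in>Good. v \<in> mycielski_proj ` e i}
      \<subseteq> {i. i < t - a \<and> Old v \<in> e i} \<union> {i. i < t - a \<and> New v \<in> e i}" for v
  proof
    fix i assume i: "i \<in> {i\<in>Good. v \<in> mycielski_proj ` e i}"
    then have "Old v \<in> e i \<or> New v \<in> e i"
      using mem_mycielski_proj_edge[OF edge] unfolding Good_def by blast
    then show "i \<in> {i. i < t - a \<and> Old v \<in> e i} \<union> {i. i < t - a \<and> New v \<in> e i}"
      using i unfolding Good_def by auto
  qed
  then have "card {i\<in>Good. v \<in> mycielski_proj ` e i} \<le> b + b" for v
    by (rule card_subset_Un_le[rotated 4]) (use mult in auto)
  then have mult': "\<forall>v. card {i\<in>Good. v \<in> mycielski_proj ` e i} \<le> 2 * b"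
    by (simp add: mult_2)
  have "(\<Union>i<t. W i) = {v. Old v \<in> (\<Union>i<t. P i)}"
    unfolding W_def by blast
  then have cover_W: "(\<Union>i<t. W i) = verts G"
    unfolding cover verts_mycielskian by auto
  have indep_W: "\<forall>i<t. indep G (W i)"
    unfolding W_def using ind indep_mycielskian_Old by blast
  have disj_W: "\<forall>i<t. \<forall>j<t. i \<noteq> j \<longrightarrow> W i \<inter> W j = {}"
    using disj unfolding W_def by blast
  have Good: "Good \<subseteq> {..<t}"
    unfolding Good_def by auto
  have sup_W: "\<forall>i\<in>Good. supports G (mycielski_proj ` e i) (W i)"
  proof
    fix i assume "i \<in> Good"
    then have "supports ?M (e i) (P i)" "Apex \<notin> e i"
      using sup unfolding Good_def by auto
    then show "supports G (mycielski_proj ` e i) (W i)"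
      unfolding W_def by (rule supports_mycielskian_proj)
  qed
  obtain t' where "t' \<le> t" "phi_ok (a + b) (2 * b) G t'"
    by (rule phi_ok_of_cover[OF fg cover_W indep_W disj_W Good sup_W bad mult'])
  then show ?thesis by blast
qed

lemma phi_mycielskian_ge:
  "finite_graph G \<Longrightarrow> phi (a + b) (2 * b) G \<le> phi a b (mycielskian G)"
  by (rule phi_mono_by_witnesses) (rule phi_ok_mycielskian_imp)

lemma phi_mycielskian_funpow_ge:
  assumes fg: "finite_graph G"
  shows "phi (a + b * (2 ^ k - 1)) (b * 2 ^ k) G \<le> phi a b ((mycielskian ^^ k) G)"
proof (induction k arbitrary: a b)
  case 0 then show ?case by simp
next
  case (Suc k)
  have "(a + b) + 2 * b * (2 ^ k - 1) = a + b * (2 ^ Suc k - 1)"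
    by (cases "2 ^ k :: nat") (simp_all add: algebra_simps)
  moreover have "2 * b * 2 ^ k = b * 2 ^ Suc k" by simp
  ultimately have "phi (a + b * (2 ^ Suc k - 1)) (b * 2 ^ Suc k) G
      \<le> phi (a + b) (2 * b) ((mycielskian ^^ k) G)"
    using Suc.IH[of "a + b" "2 * b"] by (simp only:)
  also have "\<dots> \<le> phi a b ((mycielskian ^^ Suc k) G)"
    using phi_mycielskian_ge[OF finite_graph_mycielskian_funpow[OF fg]] by simp
  finally show ?case .
qed

theorem mainTheorem8:
  fixes G :: "'a mv graph" and a b :: nat
  assumes "finite_graph G" and "b \<ge> 1"
  shows "phi a b (mycielskian G) \<ge> phi (a + b) (2 * b) G \<and>
         (\<forall>t::nat. t \<ge> 1 \<longrightarrow>
           phi 0 2 ((mycielskian ^^ t) G) \<ge> phi (2 ^ (t + 1) - 2) (2 ^ (t + 1)) G)"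
proof (intro conjI allI impI)
  show "phi (a + b) (2 * b) G \<le> phi a b (mycielskian G)"
    using phi_mycielskian_ge[OF assms(1)] .
next
  fix t :: nat
  have "phi (0 + 2 * (2 ^ t - 1)) (2 * 2 ^ t) G \<le> phi 0 2 ((mycielskian ^^ t) G)"
    by (rule phi_mycielskian_funpow_ge[OF assms(1)])
  moreover have "0 + 2 * (2 ^ t - 1) = 2 ^ (t + 1) - (2::nat)" "2 * 2 ^ t = (2::nat) ^ (t + 1)"
    by (simp_all add: right_diff_distrib')
  ultimately show "phi (2 ^ (t + 1) - 2) (2 ^ (t + 1)) G \<le> phi 0 2 ((mycielskian ^^ t) G)"
    by (simp only:)
qed

end
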